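(* Let $G=(V_1,V_2,E)$ be a bipartite graph with $n_1=|V_1|\ge1$, $n_2=|V_2|$, $n_2\ge n_1$, and $d=|E|$ edges, and let $n_2^{(\mathrm{odd})}\le n_2$ be the number of vertices of odd degree in $V_2$. Then there exists a collection of edge-disjoint simple cycles in $G$, each of length at most $2\lfloor 2\log_2(n_1)\rfloor$, whose union contains all but at most $\min\{2n_1+n_2,\ 4n_1+n_2^{(\mathrm{odd})}\}$ edges of $G$.
   Context: Graphs are finite and simple; the length of a cycle is its number of edges. *)

theory Defs
  imports Complex_Main
begin

definition bipartite_graph :: "'a set \<Rightarrow> 'a set \<Rightarrow> 'a set set \<Rightarrow> bool" where
  "bipartite_graph V1 V2 E \<longleftrightarrow> finite V1 \<and> finite V2 \<and> V1 \<inter> V2 = {} \<and>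
     (\<forall>e\<in>E. \<exists>u\<in>V1. \<exists>v\<in>V2. e = {u, v})"

definition degree :: "'a set set \<Rightarrow> 'a \<Rightarrow> nat" where
  "degree E v = card {e \<in> E. v \<in> e}"

definition cycle_edges :: "'a list \<Rightarrow> 'a set set" where
  "cycle_edges vs = {{vs ! i, vs ! ((i + 1) mod length vs)} | i. i < length vs}"

definition is_simple_cycle :: "'a set set \<Rightarrow> 'a list \<Rightarrow> bool" where
  "is_simple_cycle E vs \<longleftrightarrow> length vs \<ge> 3 \<and> distinct vs \<and> cycle_edges vs \<subseteq> E"

end

(*
  Greedily remove edge-disjoint simple cycles of length at most M = 2 floor(2 log2 n1) until
  none is left; removing a cycle preserves the parity of every degree. With 2^K <= n1 < 2^(K+1),
  the residual graph R has no cycle of length at most 4K. Its excess, the sum of deg_R w - 1 over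
  w in V2, is at most 2 n1: otherwise deleting vertices of V1 with at most two non-leaf
  neighbours (each deletion lowers the excess by at most 2) leaves a nonempty A in V1 whose
  vertices all have three non-leaf neighbours. From a root in A, paths of 2k edges then branch
  3-fold at the first step and 2-fold afterwards, while those of 2K and 2K - 2 edges end at
  distinct vertices of A because there are no short cycles; hence |A| >= 2^(K+1) > n1.
  Finally |R| = sum of deg_R w is at most n2 + excess, and also at most the number of leaves of
  R in V2 plus twice the excess, where those leaves have odd degree in the original graph.
*)

theory Submission
  imports Defs "HOL-Library.Disjoint_Sets"
begin

section \<open>Simple paths and cycles\<close>

definition is_simple_path :: "'a set set \<Rightarrow> 'a list \<Rightarrow> bool" where
  "is_simple_path F p \<longleftrightarrow> p \<noteq> [] \<and> distinct p \<and> (\<forall>i. Suc i < length p \<longrightarrow> {p ! i, p ! Suc i} \<in> F)"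

lemma is_simple_path_snoc_iff:
  assumes "p \<noteq> []"
  shows "is_simple_path F (p @ [x]) \<longleftrightarrow> is_simple_path F p \<and> x \<notin> set p \<and> {last p, x} \<in> F"
proof -
  have "(\<forall>i. Suc i < length (p @ [x]) \<longrightarrow> {(p @ [x]) ! i, (p @ [x]) ! Suc i} \<in> F) \<longleftrightarrow>
        (\<forall>i. Suc i < length p \<longrightarrow> {p ! i, p ! Suc i} \<in> F) \<and> {last p, x} \<in> F"
    using assms by (auto simp: nth_append last_conv_nth less_Suc_eq) (metis diff_Suc_1')
  then show ?thesis
    using assms by (auto simp: is_simple_path_def)
qed

lemma set_simple_path_subset:
  assumes "is_simple_path F p"
  shows "set p \<subseteq> insert (hd p) (\<Union>F)"
proof
  fix x assume "x \<in> set p"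
  then obtain i where i: "i < length p" "p ! i = x" by (auto simp: in_set_conv_nth)
  show "x \<in> insert (hd p) (\<Union>F)"
  proof (cases i)
    case 0
    then show ?thesis using i by (simp add: hd_conv_nth)
  next
    case (Suc j)
    then have "{p ! j, x} \<in> F" using assms i by (auto simp: is_simple_path_def)
    then show ?thesis by blast
  qed
qed

lemma is_simple_cycle_drop:
  assumes "is_simple_path F p" "i + 2 < length p" "{last p, p ! i} \<in> F"
  shows "is_simple_cycle F (drop i p)"
proof -
  have "{drop i p ! k, drop i p ! ((k + 1) mod (length p - i))} \<in> F" if "k < length p - i" for k
  proof (cases "k + 1 < length p - i")
    case True
    then show ?thesis using assms(1,2) by (auto simp: is_simple_path_def)
  next
    case False
    then have "k + 1 = length p - i" "i + k = length p - 1"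
      using that by simp_all
    moreover have "p \<noteq> []" using assms(2) by auto
    ultimately have "drop i p ! k = last p" "drop i p ! ((k + 1) mod (length p - i)) = p ! i"
      using assms(2) by (simp_all add: last_conv_nth)
    then show ?thesis
      using assms(3) by (simp add: insert_commute)
  qed
  then show ?thesis
    using assms by (auto simp: is_simple_cycle_def is_simple_path_def cycle_edges_def)
qed

lemma distinct_hd_eq_last:
  assumes "distinct p" "p \<noteq> []" "hd p = last p"
  shows "p = [hd p]"
proof -
  have "0 = length p - 1"
    using assms by (simp add: hd_conv_nth last_conv_nth nth_eq_iff_index_eq)
  then show ?thesis
    using assms(2) by (cases p) auto
qed

lemma simple_path_chord_cases:
  assumes "is_simple_path F p" "b \<in> set p" "b \<noteq> last p" "{b, last p} \<in> F"
  obtains p' where "p = p' @ [last p]" "p' \<noteq> []" "last p' = b"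
  | c where "is_simple_cycle F c" "length c \<le> length p"
proof -
  obtain p' z where p': "p = p' @ [z]"
    using assms(2) by (cases p rule: rev_cases) auto
  then have "b \<in> set p'" "last p = z"
    using assms(2,3) by auto
  then obtain i where i: "i < length p'" "p' ! i = b"
    by (auto simp: in_set_conv_nth)
  show ?thesis
  proof (cases "i + 1 < length p'")
    case True
    have "{last p, p ! i} \<in> F" "i + 2 < length p"
      using assms(4) p' i True \<open>last p = z\<close> by (simp_all add: nth_append insert_commute)
    then have "is_simple_cycle F (drop i p)"
      using is_simple_cycle_drop[OF assms(1)] by blast
    then show ?thesis
      using that(2) by simp
  next
    case False
    then have "p' \<noteq> []" "i = length p' - 1"
      using i(1) by auto
    then have "p' \<noteq> []" "last p' = b"
      using i(2) by (auto simp: last_conv_nth)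
    then show ?thesis
      using that(1)[of p'] p' \<open>last p = z\<close> by simp
  qed
qed

lemma simple_cycle_of_distinct_paths:
  assumes "is_simple_path F p" "is_simple_path F q" "hd p = hd q" "last p = last q" "p \<noteq> q"
  shows "\<exists>c. is_simple_cycle F c \<and> length c + 2 \<le> length p + length q"
proof -
  have "q \<noteq> []"
    using assms(2) by (simp add: is_simple_path_def)
  then show ?thesis
    using assms
  proof (induction q arbitrary: p rule: rev_nonempty_induct)
    case (single z)
    then show ?case
      using distinct_hd_eq_last[of p] by (auto simp: is_simple_path_def)
  next
    case (snoc z q)
    define b where "b = last q"
    have p: "p \<noteq> []" "last p = z"
      using snoc.prems by (auto simp: is_simple_path_def)
    have q: "is_simple_path F q" "z \<notin> set q" "{b, z} \<in> F" "b \<in> set q" "hd q = hd p"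
      using snoc.hyps snoc.prems is_simple_path_snoc_iff[of q F z] by (auto simp: b_def)
    show ?case
    proof (cases "b \<in> set p")
      case True
      have "b \<noteq> last p" "{b, last p} \<in> F"
        using p(2) q(2-4) by auto
      with snoc.prems(1) True show ?thesis
      proof (cases rule: simple_path_chord_cases)
        case (1 p')
        then obtain c where "is_simple_cycle F c" "length c + 2 \<le> length p' + length q"
          using snoc.IH[of p'] q(1,5) snoc.prems(1,5) p(2) is_simple_path_snoc_iff[of p' F z]
          by (auto simp: b_def)
        moreover have "length p = length p' + 1"
          using 1(1) by (metis length_append_singleton Suc_eq_plus1)
        ultimately show ?thesis
          by auto
      next
        case (2 c)
        then show ?thesis
          using snoc.hyps by (cases q) auto
      qed
    next
      case False
      have "is_simple_path F (p @ [b])"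
        using is_simple_path_snoc_iff[of p F b] snoc.prems(1) p q(3) False by (simp add: insert_commute)
      moreover have "p @ [b] \<noteq> q"
        using p q(2) last_in_set by fastforce
      moreover have "hd (p @ [b]) = hd q" "last (p @ [b]) = last q"
        using p(1) q(5) by (simp_all add: b_def)
      ultimately obtain c where "is_simple_cycle F c" "length c + 2 \<le> length (p @ [b]) + length q"
        using snoc.IH[of "p @ [b]"] q(1) by blast
      then show ?thesis
        by auto
    qed
  qed
qed

section \<open>Packing short cycles\<close>

lemma inj_on_cycle_edge:
  assumes "distinct c" "3 \<le> length c"
  shows "inj_on (\<lambda>i. {c ! i, c ! ((i + 1) mod length c)}) {..<length c}"
proof (rule inj_onI)
  let ?s = "\<lambda>i. (i + 1) mod length c"
  fix i j
  assume ij: "i \<in> {..<length c}" "j \<in> {..<length c}" "{c ! i, c ! ?s i} = {c ! j, c ! ?s j}"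
  have c_eq: "c ! k = c ! l \<longleftrightarrow> k = l" if "k < length c" "l < length c" for k l
    using that assms(1) by (simp add: nth_eq_iff_index_eq)
  have s_lt: "?s k < length c" for k
    by (rule mod_less_divisor) (use assms(2) in linarith)
  have s_s_ne: "((k + 1) mod n + 1) mod n \<noteq> k" if "k < n" "3 \<le> n" for k n :: nat
    using that by (auto simp: mod_if)
  show "i = j"
  proof (rule ccontr)
    assume "i \<noteq> j"
    then have "c ! i = c ! ?s j" "c ! ?s i = c ! j"
      using ij(3) c_eq[of i j] ij(1,2) by (auto simp: doubleton_eq_iff)
    then have "i = ?s j" "?s i = j"
      using ij(1,2) s_lt c_eq by simp_all
    moreover have "?s (?s i) \<noteq> i"
      using s_s_ne ij(1) assms(2) by simp
    ultimately show False
      by metis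
  qed
qed

lemma card_lessThan_Suc_mod:
  fixes n :: nat
  shows "card {i \<in> {..<n}. P ((i + 1) mod n)} = card {i \<in> {..<n}. P i}"
proof (cases "n = 0")
  case False
  let ?s = "\<lambda>i. (i + 1) mod n"
  have s_inj: "inj_on ?s {..<n}"
    by (rule inj_onI) (auto simp: mod_if split: if_splits)
  moreover have "?s ` {..<n} \<subseteq> {..<n}"
    using False by auto
  ultimately have "?s ` {..<n} = {..<n}"
    by (intro endo_inj_surj) auto
  then have "?s ` {i \<in> {..<n}. P (?s i)} = {i \<in> {..<n}. P i}"
    using False by (auto simp: image_iff)
  moreover have "inj_on ?s {i \<in> {..<n}. P (?s i)}"
    by (rule inj_on_subset[OF s_inj]) auto
  ultimately show ?thesis
    by (intro bij_betw_same_card) (simp add: bij_betw_def)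
qed simp

lemma even_degree_cycle_edges:
  assumes "is_simple_cycle F c"
  shows "even (degree (cycle_edges c) v)"
proof -
  define n where "n = length c"
  define ed where "ed i = {c ! i, c ! ((i + 1) mod n)}" for i
  have n: "3 \<le> n" and dist: "distinct c"
    using assms by (auto simp: is_simple_cycle_def n_def)
  have "{e \<in> cycle_edges c. v \<in> e} = ed ` {i \<in> {..<n}. v \<in> ed i}"
    by (auto simp: cycle_edges_def ed_def n_def)
  moreover have "inj_on ed {..<n}"
    unfolding ed_def n_def using inj_on_cycle_edge[OF dist] n by (simp add: n_def)
  ultimately have "degree (cycle_edges c) v = card {i \<in> {..<n}. v \<in> ed i}"
    unfolding degree_def by (metis (no_types, lifting) card_image inj_on_subset mem_Collect_eq subsetI)
  \<comment> \<open>v is the first or the second vertex of each edge at it, and the two counts agree by rotation.\<close>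
  also have "{i \<in> {..<n}. v \<in> ed i} = {i \<in> {..<n}. c ! i = v} \<union> {i \<in> {..<n}. c ! ((i + 1) mod n) = v}"
    by (auto simp: ed_def)
  also have "card \<dots> = card {i \<in> {..<n}. c ! i = v} + card {i \<in> {..<n}. c ! ((i + 1) mod n) = v}"
  proof (rule card_Un_disjoint)
    have "(i + 1) mod n \<noteq> i" "(i + 1) mod n < n" if "i < n" for i
      using that n by (auto simp: mod_if)
    then have "c ! i \<noteq> c ! ((i + 1) mod n)" if "i < n" for i
      using that dist nth_eq_iff_index_eq unfolding n_def by metis
    then show "{i \<in> {..<n}. c ! i = v} \<inter> {i \<in> {..<n}. c ! ((i + 1) mod n) = v} = {}"
      by fastforce
  qed simp_all
  also have "card {i \<in> {..<n}. c ! ((i + 1) mod n) = v} = card {i \<in> {..<n}. c ! i = v}"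
    by (rule card_lessThan_Suc_mod)
  finally show ?thesis by simp
qed

lemma degree_Diff_add:
  assumes "finite F" "G \<subseteq> F"
  shows "degree F v = degree (F - G) v + degree G v"
proof -
  have "{e \<in> F. v \<in> e} = {e \<in> F - G. v \<in> e} \<union> {e \<in> G. v \<in> e}"
    using assms(2) by blast
  also have "card \<dots> = card {e \<in> F - G. v \<in> e} + card {e \<in> G. v \<in> e}"
    by (rule card_Un_disjoint) (use assms in \<open>auto intro: finite_subset\<close>)
  finally show ?thesis
    by (simp add: degree_def)
qed

lemma cycle_edges_nonempty:
  assumes "is_simple_cycle F c"
  shows "cycle_edges c \<noteq> {}"
  using assms by (auto simp: is_simple_cycle_def cycle_edges_def intro: exI[of _ 0])

lemma exists_maximal_short_cycle_packing:
  assumes "finite F"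
  shows "\<exists>C. finite C \<and> (\<forall>c\<in>C. is_simple_cycle F c \<and> length c \<le> M) \<and>
    disjoint_family_on cycle_edges C \<and>
    (\<forall>c. is_simple_cycle (F - \<Union>(cycle_edges ` C)) c \<longrightarrow> M < length c) \<and>
    (\<forall>v. even (degree (F - \<Union>(cycle_edges ` C)) v) = even (degree F v))"
  using assms
proof (induction "card F" arbitrary: F rule: less_induct)
  case less
  show ?case
  proof (cases "\<exists>c. is_simple_cycle F c \<and> length c \<le> M")
    case False
    then show ?thesis
      by (intro exI[of _ "{}"]) (auto simp: not_le disjoint_family_on_def)
  next
    case True
    then obtain c where c: "is_simple_cycle F c" "length c \<le> M"
      by blast
    define F' where "F' = F - cycle_edges c"
    have c_sub: "cycle_edges c \<subseteq> F"
      using c(1) by (simp add: is_simple_cycle_def)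
    then have smaller: "card F' < card F"
      using cycle_edges_nonempty[OF c(1)] less.prems
      by (auto simp: F'_def intro!: psubset_card_mono)
    have "finite F'"
      using less.prems by (simp add: F'_def)
    obtain C where C: "finite C" "\<forall>c\<in>C. is_simple_cycle F' c \<and> length c \<le> M"
      "disjoint_family_on cycle_edges C"
      "\<forall>c. is_simple_cycle (F' - \<Union>(cycle_edges ` C)) c \<longrightarrow> M < length c"
      "\<forall>v. even (degree (F' - \<Union>(cycle_edges ` C)) v) = even (degree F' v)"
      using less.hyps[OF smaller \<open>finite F'\<close>] by blast
    have disjoint: "cycle_edges c' \<inter> cycle_edges c = {}" if "c' \<in> C" for c'
      using C(2) that unfolding is_simple_cycle_def F'_def by blast
    have residual: "F - (cycle_edges c \<union> \<Union>(cycle_edges ` C)) = F' - \<Union>(cycle_edges ` C)"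
      unfolding F'_def by blast
    have "even (degree F' v) = even (degree F v)" for v
      using degree_Diff_add[OF less.prems c_sub, of v] even_degree_cycle_edges[OF c(1), of v]
      by (simp add: F'_def)
    moreover have "is_simple_cycle F c'" if "is_simple_cycle F' c'" for c'
      using that unfolding is_simple_cycle_def F'_def by blast
    moreover have "disjoint_family_on cycle_edges (insert c C)"
      using C(3) disjoint unfolding disjoint_family_on_def by blast
    ultimately show ?thesis
      using C c by (intro exI[of _ "insert c C"]) (simp add: residual)
  qed
qed

section \<open>The excess of a bipartite graph\<close>

lemma bipartite_edgeE:
  assumes "bipartite_graph V1 V2 F" "e \<in> F"
  obtains u w where "u \<in> V1" "w \<in> V2" "e = {u, w}"
  using assms by (auto simp: bipartite_graph_def)

lemma bipartite_graph_finite_edges: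
  assumes "bipartite_graph V1 V2 F"
  shows "finite F"
proof (rule finite_subset)
  show "F \<subseteq> Pow (V1 \<union> V2)"
    using assms by (auto simp: bipartite_graph_def)
  show "finite (Pow (V1 \<union> V2))"
    using assms by (simp add: bipartite_graph_def)
qed

lemma bipartite_graph_subset:
  "bipartite_graph V1 V2 F \<Longrightarrow> G \<subseteq> F \<Longrightarrow> bipartite_graph V1 V2 G"
  by (auto simp: bipartite_graph_def)

lemma card_edges_eq_sum_degree:
  assumes bip: "bipartite_graph V1 V2 F"
  shows "card F = (\<Sum>w\<in>V2. degree F w)"
proof -
  have fin: "finite V2" "finite F" and disj: "V1 \<inter> V2 = {}"
    using bip bipartite_graph_finite_edges by (auto simp: bipartite_graph_def)
  have "F = (\<Union>w\<in>V2. {e \<in> F. w \<in> e})"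
    using bip by (fastforce simp: bipartite_graph_def)
  also have "card \<dots> = (\<Sum>w\<in>V2. card {e \<in> F. w \<in> e})"
  proof (rule card_UN_disjoint)
    show "\<forall>w\<in>V2. \<forall>w'\<in>V2. w \<noteq> w' \<longrightarrow> {e \<in> F. w \<in> e} \<inter> {e \<in> F. w' \<in> e} = {}"
      using bip disj by (fastforce simp: bipartite_graph_def)
  qed (use fin in auto)
  finally show ?thesis
    by (simp add: degree_def)
qed

text \<open>Isolated vertices contribute 0 to the excess, by truncated subtraction.\<close>

definition excess :: "'a set set \<Rightarrow> 'a set \<Rightarrow> nat" where
  "excess F B = (\<Sum>w\<in>B. degree F w - 1)"

lemma card_edges_le_excess:
  assumes "bipartite_graph V1 V2 F"
  shows "card F \<le> card V2 + excess F V2"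
proof -
  have "card F = (\<Sum>w\<in>V2. degree F w)"
    using assms by (rule card_edges_eq_sum_degree)
  also have "\<dots> \<le> (\<Sum>w\<in>V2. 1 + (degree F w - 1))"
    by (rule sum_mono) simp
  also have "\<dots> = card V2 + excess F V2"
    unfolding sum.distrib excess_def by simp
  finally show ?thesis .
qed

lemma card_edges_le_leaves_excess:
  assumes "bipartite_graph V1 V2 F"
  shows "card F \<le> card {w \<in> V2. degree F w = 1} + 2 * excess F V2"
proof -
  have "finite V2"
    using assms by (simp add: bipartite_graph_def)
  have "(\<Sum>w\<in>V2. degree F w) \<le> (\<Sum>w\<in>V2. (if degree F w = 1 then 1 else 0) + 2 * (degree F w - 1))"
    by (rule sum_mono) (simp; arith)
  also have "\<dots> = card {w \<in> V2. degree F w = 1} + 2 * excess F V2"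
    using \<open>finite V2\<close>
    by (simp add: sum.distrib excess_def sum.If_cases sum_distrib_left Int_def)
  finally show ?thesis
    using card_edges_eq_sum_degree[OF assms] by simp
qed

definition incident_edges :: "'a set set \<Rightarrow> 'a set \<Rightarrow> 'a set set" where
  "incident_edges F A = {e \<in> F. e \<inter> A \<noteq> {}}"

definition nonleaf_degree :: "'a set set \<Rightarrow> 'a set \<Rightarrow> 'a \<Rightarrow> nat" where
  "nonleaf_degree F B v = card {w \<in> B. 2 \<le> degree F w \<and> {v, w} \<in> F}"

lemma incident_edges_part:
  "bipartite_graph V1 V2 F \<Longrightarrow> incident_edges F V1 = F"
  by (fastforce simp: bipartite_graph_def incident_edges_def)

lemma bipartite_graph_incident_edges:
  assumes "bipartite_graph V1 V2 F" "A \<subseteq> V1"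
  shows "bipartite_graph A V2 (incident_edges F A)"
proof -
  have "\<exists>u\<in>A. \<exists>w\<in>V2. e = {u, w}" if "e \<in> incident_edges F A" for e
  proof -
    have "e \<in> F" "e \<inter> A \<noteq> {}"
      using that by (auto simp: incident_edges_def)
    moreover obtain u w where "u \<in> V1" "w \<in> V2" "e = {u, w}"
      using bipartite_edgeE[OF assms(1) \<open>e \<in> F\<close>] .
    ultimately show ?thesis
      using assms by (auto simp: bipartite_graph_def)
  qed
  then show ?thesis
    using assms finite_subset unfolding bipartite_graph_def by blast
qed

lemma degree_incident_edges_remove_le:
  assumes bip: "bipartite_graph V1 V2 F" and "A \<subseteq> V1" "w \<in> V2"
  shows "degree (incident_edges F A) w \<le>
    degree (incident_edges F (A - {v})) w + (if {v, w} \<in> incident_edges F A then 1 else 0)"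
proof -
  have "{e \<in> incident_edges F A. w \<in> e} \<subseteq>
      {e \<in> incident_edges F (A - {v}). w \<in> e} \<union> ({{v, w}} \<inter> incident_edges F A)"
    using assms unfolding bipartite_graph_def incident_edges_def by blast
  moreover have "finite (incident_edges F (A - {v}))"
    using bipartite_graph_finite_edges[OF bip] by (simp add: incident_edges_def)
  ultimately have "degree (incident_edges F A) w \<le>
      card ({e \<in> incident_edges F (A - {v}). w \<in> e} \<union> ({{v, w}} \<inter> incident_edges F A))"
    unfolding degree_def by (intro card_mono) auto
  also have "\<dots> \<le> degree (incident_edges F (A - {v})) w + card ({{v, w}} \<inter> incident_edges F A)"
    unfolding degree_def by (rule card_Un_le)
  finally show ?thesis
    by (cases "{v, w} \<in> incident_edges F A") auto
qed

lemma excess_incident_edges_remove_le: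
  assumes bip: "bipartite_graph V1 V2 F" and "A \<subseteq> V1"
  shows "excess (incident_edges F A) V2 \<le>
    excess (incident_edges F (A - {v})) V2 + nonleaf_degree (incident_edges F A) V2 v"
proof -
  let ?G = "incident_edges F A" and ?G' = "incident_edges F (A - {v})"
  have "finite V2"
    using bip by (simp add: bipartite_graph_def)
  have "excess ?G V2 \<le>
      (\<Sum>w\<in>V2. (degree ?G' w - 1) + (if 2 \<le> degree ?G w \<and> {v, w} \<in> ?G then 1 else 0))"
    unfolding excess_def
    by (rule sum_mono) (use degree_incident_edges_remove_le[OF assms, of _ v] in fastforce)
  also have "\<dots> = excess ?G' V2 + nonleaf_degree ?G V2 v"
    using \<open>finite V2\<close> by (simp add: excess_def nonleaf_degree_def sum.distrib sum.If_cases Int_def)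
  finally show ?thesis .
qed

lemma exists_nonleaf_core:
  assumes bip: "bipartite_graph V1 V2 F"
  shows "A \<subseteq> V1 \<Longrightarrow> 2 * card A < excess (incident_edges F A) V2 \<Longrightarrow>
    \<exists>A'\<subseteq>A. A' \<noteq> {} \<and> (\<forall>v\<in>A'. 3 \<le> nonleaf_degree (incident_edges F A') V2 v)"
proof (induction "card A" arbitrary: A rule: less_induct)
  case less
  have "finite A"
    using less.prems(1) bip finite_subset by (auto simp: bipartite_graph_def)
  show ?case
  proof (cases "\<exists>v\<in>A. nonleaf_degree (incident_edges F A) V2 v \<le> 2")
    case True
    then obtain v where v: "v \<in> A" "nonleaf_degree (incident_edges F A) V2 v \<le> 2"
      by blast
    have "0 < card A"
      using v(1) \<open>finite A\<close> card_gt_0_iff by blast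
    then have "card (A - {v}) < card A" "card A = card (A - {v}) + 1"
      using v(1) \<open>finite A\<close> by simp_all
    moreover have "2 * card (A - {v}) < excess (incident_edges F (A - {v})) V2"
      using excess_incident_edges_remove_le[OF bip less.prems(1), of v] v(2) less.prems(2)
        calculation(2) by linarith
    ultimately show ?thesis
      using less.hyps[of "A - {v}"] less.prems(1) by blast
  next
    case False
    moreover have "A \<noteq> {}"
      using less.prems(2) by (auto simp: excess_def degree_def incident_edges_def)
    ultimately show ?thesis
      by (intro exI[of _ A]) (auto simp: not_le Suc_le_eq)
  qed
qed

section \<open>A Moore bound for bipartite graphs\<close>

definition rooted_paths :: "'a set set \<Rightarrow> 'a set \<Rightarrow> 'a \<Rightarrow> nat \<Rightarrow> 'a list set" where
  "rooted_paths F A r k =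
    {p. is_simple_path F p \<and> hd p = r \<and> last p \<in> A \<and> length p = 2 * k + 1}"

context
  fixes A B :: "'a set" and F :: "'a set set" and K :: nat
  assumes bip: "bipartite_graph A B F"
    and branching: "\<And>v. v \<in> A \<Longrightarrow> 3 \<le> nonleaf_degree F B v"
    and girth: "\<And>c. is_simple_cycle F c \<Longrightarrow> 4 * K < length c"
begin

lemma other_neighbour:
  assumes "w \<in> B" "2 \<le> degree F w"
  obtains u where "u \<in> A" "u \<noteq> v" "{u, w} \<in> F"
proof -
  have "\<not> {e \<in> F. w \<in> e} \<subseteq> {{v, w}}"
    using assms(2) card_mono[of "{{v, w}}" "{e \<in> F. w \<in> e}"] by (auto simp: degree_def)
  then obtain e where e: "e \<in> F" "w \<in> e" "e \<noteq> {v, w}"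
    by blast
  obtain u w' where u: "u \<in> A" "w' \<in> B" "e = {u, w'}"
    using bipartite_edgeE[OF bip e(1)] .
  have "u \<noteq> w"
    using bip u(1) assms(1) by (auto simp: bipartite_graph_def)
  then have "e = {u, w}"
    using u(3) e(2) by auto
  then show ?thesis
    using that u(1) e(1,3) by auto
qed

lemma two_le_card_part:
  assumes "r \<in> A"
  shows "2 \<le> card A"
proof -
  have "{w \<in> B. 2 \<le> degree F w \<and> {r, w} \<in> F} \<noteq> {}"
    using branching[OF assms] unfolding nonleaf_degree_def by (metis card.empty not_numeral_le_zero)
  then obtain w where "w \<in> B" "2 \<le> degree F w"
    by blast
  then obtain u where "u \<in> A" "u \<noteq> r"
    using other_neighbour by metis
  then have "card {r, u} \<le> card A"
    using assms bip by (intro card_mono) (auto simp: bipartite_graph_def)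
  then show ?thesis
    using \<open>u \<noteq> r\<close> by simp
qed

lemma no_short_chord:
  assumes "is_simple_path F p" "length p \<le> 4 * K" "{last p, p ! i} \<in> F"
  shows "length p \<le> i + 2"
  using is_simple_cycle_drop[OF assms(1) _ assms(3)] girth[of "drop i p"] assms(2)
  by fastforce

lemma finite_rooted_paths: "finite (rooted_paths F A r k)"
proof (rule finite_subset)
  have "\<Union>F \<subseteq> A \<union> B"
    using bip by (auto simp: bipartite_graph_def)
  then show "rooted_paths F A r k \<subseteq> {p. set p \<subseteq> insert r (A \<union> B) \<and> length p = 2 * k + 1}"
    using set_simple_path_subset by (fastforce simp: rooted_paths_def)
  show "finite {p. set p \<subseteq> insert r (A \<union> B) \<and> length p = 2 * k + 1}"
    using bip by (intro finite_lists_length_eq) (simp add: bipartite_graph_def)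
qed

lemma rooted_paths_0:
  assumes "r \<in> A"
  shows "rooted_paths F A r 0 = {[r]}"
proof -
  have "p = [r]" if "length p = 1" "hd p = r" for p :: "'a list"
    using that by (cases p) auto
  then show ?thesis
    using assms by (auto simp: rooted_paths_def is_simple_path_def)
qed

lemma card_fresh_nonleaf_neighbours:
  assumes "k < K" "p \<in> rooted_paths F A r k"
  shows "(if k = 0 then 3 else 2) \<le> card ({w \<in> B. 2 \<le> degree F w \<and> {last p, w} \<in> F} - set p)"
proof -
  define N where "N = {w \<in> B. 2 \<le> degree F w \<and> {last p, w} \<in> F}"
  have p: "is_simple_path F p" "last p \<in> A" "length p = 2 * k + 1"
    using assms(2) by (auto simp: rooted_paths_def)
  then have last_p: "last p = p ! (2 * k)"
    by (cases p rule: rev_cases) (auto simp: nth_append)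
  \<comment> \<open>A neighbour of the endpoint lying on the path must be its predecessor,
    as there are no short cycles.\<close>
  have "N \<inter> set p \<subseteq> (if k = 0 then {} else {p ! (2 * k - 1)})"
  proof
    fix w assume w: "w \<in> N \<inter> set p"
    then obtain i where i: "i < length p" "p ! i = w"
      by (auto simp: in_set_conv_nth)
    have "length p \<le> i + 2"
      using no_short_chord[OF p(1)] p(3) assms(1) w i(2) by (simp add: N_def)
    moreover have "p ! i \<noteq> last p"
      using w i(2) p(2) bip by (auto simp: N_def bipartite_graph_def)
    then have "i \<noteq> 2 * k"
      using last_p by auto
    ultimately have "k \<noteq> 0 \<and> i = 2 * k - 1"
      using i(1) p(3) by auto
    then show "w \<in> (if k = 0 then {} else {p ! (2 * k - 1)})"
      using i(2) by auto
  qed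
  then have "card (N \<inter> set p) \<le> (if k = 0 then 0 else 1)"
    using card_mono[of "{p ! (2 * k - 1)}"] by (cases "k = 0") auto
  moreover have "3 \<le> card N"
    using branching[OF p(2)] by (simp add: N_def nonleaf_degree_def)
  moreover have "finite N"
    using bip by (simp add: N_def bipartite_graph_def)
  ultimately show ?thesis
    unfolding N_def[symmetric] by (auto simp: card_Diff_subset_Int split: if_splits)
qed

lemma extend_rooted_path:
  assumes "k < K" "p \<in> rooted_paths F A r k"
    and w: "w \<in> B" "2 \<le> degree F w" "{last p, w} \<in> F" "w \<notin> set p"
  obtains u where "p @ [w, u] \<in> rooted_paths F A r (Suc k)"
proof -
  have p: "is_simple_path F p" "hd p = r" "last p \<in> A" "length p = 2 * k + 1"
    using assms(2) by (auto simp: rooted_paths_def)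
  then have last_p: "last p = p ! (2 * k)"
    by (cases p rule: rev_cases) (auto simp: nth_append)
  have "p \<noteq> []"
    using p(4) by auto
  then have pw: "is_simple_path F (p @ [w])"
    using is_simple_path_snoc_iff[of p F w] p(1) w by auto
  obtain u where u: "u \<in> A" "u \<noteq> last p" "{u, w} \<in> F"
    using other_neighbour[OF w(1,2)] .
  have "u \<notin> set p"
  proof
    assume "u \<in> set p"
    then obtain i where i: "i < length p" "p ! i = u"
      by (auto simp: in_set_conv_nth)
    have "{last (p @ [w]), (p @ [w]) ! i} \<in> F"
      using u(3) i by (simp add: nth_append insert_commute)
    then have "length (p @ [w]) \<le> i + 2"
      using no_short_chord[OF pw] p(4) assms(1) by simp
    then have "i = 2 * k"
      using i(1) p(4) by simp
    then have "p ! i = last p"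
      using last_p by simp
    then show False
      using i(2) u(2) by simp
  qed
  moreover have "u \<noteq> w"
    using u(1) w(1) bip by (auto simp: bipartite_graph_def)
  ultimately have "is_simple_path F ((p @ [w]) @ [u])"
    using is_simple_path_snoc_iff[of "p @ [w]" F u] pw u(3) by (simp add: insert_commute)
  then have "p @ [w, u] \<in> rooted_paths F A r (Suc k)"
    using p u(1) \<open>p \<noteq> []\<close> by (auto simp: rooted_paths_def)
  then show ?thesis ..
qed

lemma card_extensions:
  assumes "k < K" "p \<in> rooted_paths F A r k"
  shows "(if k = 0 then 3 else 2) \<le> card {q \<in> rooted_paths F A r (Suc k). take (2 * k + 1) q = p}"
proof -
  let ?W = "{w \<in> B. 2 \<le> degree F w \<and> {last p, w} \<in> F} - set p"
  let ?Ext = "{q \<in> rooted_paths F A r (Suc k). take (2 * k + 1) q = p}"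
  have "?W \<subseteq> (\<lambda>q. q ! (2 * k + 1)) ` ?Ext"
  proof
    fix w assume "w \<in> ?W"
    then obtain u where "p @ [w, u] \<in> rooted_paths F A r (Suc k)"
      using extend_rooted_path[OF assms] by blast
    moreover have "length p = 2 * k + 1"
      using assms(2) by (simp add: rooted_paths_def)
    ultimately show "w \<in> (\<lambda>q. q ! (2 * k + 1)) ` ?Ext"
      by (intro image_eqI[where x = "p @ [w, u]"]) (simp_all add: nth_append)
  qed
  have "finite ?Ext"
    using finite_rooted_paths by simp
  then have "card ?W \<le> card ?Ext"
    using card_mono[OF finite_imageI \<open>?W \<subseteq> _\<close>] card_image_le by (meson le_trans)
  then show ?thesis
    using card_fresh_nonleaf_neighbours[OF assms] by linarith
qed

lemma card_rooted_paths_Suc: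
  assumes "k < K"
  shows "(if k = 0 then 3 else 2) * card (rooted_paths F A r k) \<le> card (rooted_paths F A r (Suc k))"
proof -
  define Ext where "Ext p = {q \<in> rooted_paths F A r (Suc k). take (2 * k + 1) q = p}" for p
  have "(if k = 0 then 3 else 2) * card (rooted_paths F A r k) \<le> (\<Sum>p\<in>rooted_paths F A r k. card (Ext p))"
    using sum_bounded_below[of "rooted_paths F A r k" "if k = 0 then 3 else 2" "\<lambda>p. card (Ext p)"]
      card_extensions[OF assms] by (simp add: Ext_def mult.commute)
  also have "\<dots> = card (\<Union>p\<in>rooted_paths F A r k. Ext p)"
    by (rule card_UN_disjoint[symmetric]) (auto simp: Ext_def finite_rooted_paths)
  also have "\<dots> \<le> card (rooted_paths F A r (Suc k))"
    by (rule card_mono) (auto simp: Ext_def finite_rooted_paths)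
  finally show ?thesis .
qed

lemma card_rooted_paths:
  assumes "r \<in> A" "1 \<le> k" "k \<le> K"
  shows "3 * 2 ^ (k - 1) \<le> card (rooted_paths F A r k)"
  using assms(2,3)
proof (induction k)
  case (Suc k)
  show ?case
  proof (cases "k = 0")
    case True
    then show ?thesis
      using card_rooted_paths_Suc[of 0 r] Suc.prems rooted_paths_0[OF assms(1)] by simp
  next
    case False
    then show ?thesis
      using Suc card_rooted_paths_Suc[of k r] by (cases k) auto
  qed
qed simp

lemma inj_on_last_rooted_paths:
  "inj_on last (rooted_paths F A r K \<union> rooted_paths F A r (K - 1))"
proof
  fix p q
  assume p: "p \<in> rooted_paths F A r K \<union> rooted_paths F A r (K - 1)"
    and q: "q \<in> rooted_paths F A r K \<union> rooted_paths F A r (K - 1)"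
    and "last p = last q"
  show "p = q"
  proof (rule ccontr)
    assume "p \<noteq> q"
    then obtain c where "is_simple_cycle F c" "length c + 2 \<le> length p + length q"
      using simple_cycle_of_distinct_paths[of F p q] p q \<open>last p = last q\<close>
      by (auto simp: rooted_paths_def)
    moreover have "length p \<le> 2 * K + 1" "length q \<le> 2 * K + 1"
      using p q by (auto simp: rooted_paths_def)
    ultimately show False
      using girth by fastforce
  qed
qed

lemma card_two_top_rooted_paths:
  assumes "r \<in> A" "1 \<le> K"
  shows "2 ^ (K + 1) \<le> card (rooted_paths F A r K) + card (rooted_paths F A r (K - 1))"
proof (cases "K = 1")
  case True
  then show ?thesis
    using card_rooted_paths[OF assms(1), of 1] rooted_paths_0[OF assms(1)] by simp
next
  case False
  then have K: "K = (K - 2) + 2"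
    using assms(2) by simp
  have "(2::nat) ^ (K + 1) \<le> 3 * 2 ^ (K - 1) + 3 * 2 ^ (K - 1 - 1)"
    by (subst (1 2 3) K) (simp add: power_add)
  moreover have "3 * 2 ^ (K - 1) \<le> card (rooted_paths F A r K)"
    using card_rooted_paths[OF assms(1), of K] assms(2) by simp
  moreover have "3 * 2 ^ (K - 1 - 1) \<le> card (rooted_paths F A r (K - 1))"
    using card_rooted_paths[OF assms(1), of "K - 1"] False assms(2) by simp
  ultimately show ?thesis
    by linarith
qed

theorem moore_bound:
  assumes "A \<noteq> {}"
  shows "2 ^ (K + 1) \<le> card A"
proof -
  obtain r where r: "r \<in> A"
    using assms by blast
  show ?thesis
  proof (cases "K = 0")
    case True
    then show ?thesis
      using two_le_card_part[OF r] by simp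
  next
    case False
    let ?P = "rooted_paths F A r K \<union> rooted_paths F A r (K - 1)"
    have "2 ^ (K + 1) \<le> card (rooted_paths F A r K) + card (rooted_paths F A r (K - 1))"
      using card_two_top_rooted_paths[OF r] False by simp
    also have "\<dots> = card ?P"
      using False finite_rooted_paths
      by (intro card_Un_disjoint[symmetric]) (auto simp: rooted_paths_def)
    also have "\<dots> = card (last ` ?P)"
      using inj_on_last_rooted_paths by (simp add: card_image)
    also have "\<dots> \<le> card A"
      using bip by (intro card_mono) (auto simp: rooted_paths_def bipartite_graph_def)
    finally show ?thesis .
  qed
qed

end

lemma excess_le_twice_card_part:
  assumes bip: "bipartite_graph V1 V2 R" and "card V1 < 2 ^ (K + 1)"
    and girth: "\<And>c. is_simple_cycle R c \<Longrightarrow> 4 * K < length c"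
  shows "excess R V2 \<le> 2 * card V1"
proof (rule ccontr)
  assume "\<not> excess R V2 \<le> 2 * card V1"
  then have "2 * card V1 < excess (incident_edges R V1) V2"
    using incident_edges_part[OF bip] by simp
  then obtain A where A: "A \<subseteq> V1" "A \<noteq> {}" "\<And>v. v \<in> A \<Longrightarrow> 3 \<le> nonleaf_degree (incident_edges R A) V2 v"
    using exists_nonleaf_core[OF bip subset_refl] by blast
  have "4 * K < length c" if "is_simple_cycle (incident_edges R A) c" for c
    using that girth by (auto simp: is_simple_cycle_def incident_edges_def)
  then have "2 ^ (K + 1) \<le> card A"
    using moore_bound[OF bipartite_graph_incident_edges[OF bip A(1)] A(3)] A(2) by simp
  moreover have "card A \<le> card V1"
    using A(1) bip by (intro card_mono) (auto simp: bipartite_graph_def)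
  ultimately show False
    using assms(2) by linarith
qed

lemma twice_le_nat_floor_twice_log2:
  assumes "2 ^ K \<le> n"
  shows "2 * K \<le> nat \<lfloor>2 * log 2 (real n)\<rfloor>"
proof -
  have "real (2 * K) \<le> 2 * log 2 (real n)"
    using le_log2_of_power[OF assms] by simp
  then have "int (2 * K) \<le> \<lfloor>2 * log 2 (real n)\<rfloor>"
    by (simp add: le_floor_iff)
  then show ?thesis
    by linarith
qed

theorem lemmaA3:
  fixes V1 V2 :: "'a set" and E :: "'a set set"
  assumes "bipartite_graph V1 V2 E"
    and "card V1 \<ge> 1"
    and "card V2 \<ge> card V1"
  shows "\<exists>C :: 'a list set. finite C \<and>
     (\<forall>c\<in>C. is_simple_cycle E c \<and>
        length c \<le> 2 * nat \<lfloor>2 * log 2 (real (card V1))\<rfloor>) \<and>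
     (\<forall>c1\<in>C. \<forall>c2\<in>C. c1 \<noteq> c2 \<longrightarrow> cycle_edges c1 \<inter> cycle_edges c2 = {}) \<and>
     card (E - \<Union>(cycle_edges ` C)) \<le>
       min (2 * card V1 + card V2) (4 * card V1 + card {v \<in> V2. odd (degree E v)})"
proof -
  define M where "M = 2 * nat \<lfloor>2 * log 2 (real (card V1))\<rfloor>"
  obtain C where C: "finite C" "\<forall>c\<in>C. is_simple_cycle E c \<and> length c \<le> M"
    "disjoint_family_on cycle_edges C"
    "\<forall>c. is_simple_cycle (E - \<Union>(cycle_edges ` C)) c \<longrightarrow> M < length c"
    "\<forall>v. even (degree (E - \<Union>(cycle_edges ` C)) v) = even (degree E v)"
    using exists_maximal_short_cycle_packing[OF bipartite_graph_finite_edges[OF assms(1)], of M]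
    by blast
  define R where "R = E - \<Union>(cycle_edges ` C)"
  have bip: "bipartite_graph V1 V2 R"
    using bipartite_graph_subset[OF assms(1)] by (auto simp: R_def)
  obtain K where K: "2 ^ K \<le> card V1" "card V1 < 2 ^ (K + 1)"
    using ex_power_ivl1[of 2 "card V1"] assms(2) by auto
  have "4 * K \<le> M"
    using twice_le_nat_floor_twice_log2[OF K(1)] by (simp add: M_def)
  then have "excess R V2 \<le> 2 * card V1"
    using excess_le_twice_card_part[OF bip K(2)] C(4) by (fastforce simp: R_def)
  moreover have "{w \<in> V2. degree R w = 1} \<subseteq> {v \<in> V2. odd (degree E v)}"
    using C(5) unfolding R_def by (metis (mono_tags, lifting) Collect_mono odd_one)
  then have "card {w \<in> V2. degree R w = 1} \<le> card {v \<in> V2. odd (degree E v)}"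
    using assms(1) by (intro card_mono) (auto simp: bipartite_graph_def)
  ultimately have "card R \<le> min (2 * card V1 + card V2) (4 * card V1 + card {v \<in> V2. odd (degree E v)})"
    using card_edges_le_excess[OF bip] card_edges_le_leaves_excess[OF bip] by simp
  then show ?thesis
    using C(1-3) unfolding R_def M_def disjoint_family_on_def by blast
qed

end
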